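(* Let $P\in\mathbb C[x_1,\dots,x_4,y_1,\dots,y_6]$ not depend on $y_3$, write $P=\sum_{i\ge0}y_1^iP_i$ with each $P_i$ independent of $y_1$, and suppose $\mathbf DP=\mathbf D_1P=\mathbf D_2P=\mathbf D_3P=\mathbf D_4P=0$, where $\mathbf D=\partial_{y_4}\partial_{y_3}-\partial_{y_5}\partial_{y_2}+\partial_{y_6}\partial_{y_1}$, $\mathbf D_1=\partial_{y_6}\partial_{x_4}-\partial_{y_2}\partial_{x_3}+\partial_{y_3}\partial_{x_2}$, $\mathbf D_2=\partial_{y_5}\partial_{x_4}-\partial_{y_1}\partial_{x_3}+\partial_{y_3}\partial_{x_1}$, $\mathbf D_3=\partial_{y_4}\partial_{x_4}-\partial_{y_1}\partial_{x_2}+\partial_{y_2}\partial_{x_1}$, $\mathbf D_4=\partial_{y_4}\partial_{x_3}-\partial_{y_5}\partial_{x_2}+\partial_{y_6}\partial_{x_1}$. Then there exists $K\in\mathbb C[x_1,\dots,x_4,y_1,\dots,y_6]$ depending neither on $y_1$ nor on $y_3$ such that $\mathbf DK=-\partial_{y_6}P_0$, $\mathbf D_1K=0$, $\mathbf D_2K=\partial_{x_3}P_0$, $\mathbf D_3K=\partial_{x_2}P_0$ and $\mathbf D_4K=0$. *)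

theory Defs
  imports Complex_Main "HOL-Library.Poly_Mapping"
begin

datatype var = X1 | X2 | X3 | X4 | Y1 | Y2 | Y3 | Y4 | Y5 | Y6

type_synonym mpoly = "(var \<Rightarrow> nat) \<Rightarrow>\<^sub>0 complex"

definition indep :: "var \<Rightarrow> mpoly \<Rightarrow> bool" where
  "indep v P \<longleftrightarrow> (\<forall>m \<in> Poly_Mapping.keys P. m v = 0)"

definition pd :: "var \<Rightarrow> mpoly \<Rightarrow> mpoly" where
  "pd v P = (\<Sum>m\<in>Poly_Mapping.keys P. Poly_Mapping.single (m(v := m v - 1)) (of_nat (m v) * Poly_Mapping.lookup P m))"

definition y1coeff :: "nat \<Rightarrow> mpoly \<Rightarrow> mpoly" where
  "y1coeff i P = (\<Sum>m\<in>{m \<in> Poly_Mapping.keys P. m Y1 = i}. Poly_Mapping.single (m(Y1 := 0)) (Poly_Mapping.lookup P m))"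

definition DD :: "mpoly \<Rightarrow> mpoly" where
  "DD P = pd Y4 (pd Y3 P) - pd Y5 (pd Y2 P) + pd Y6 (pd Y1 P)"
definition DD1 :: "mpoly \<Rightarrow> mpoly" where
  "DD1 P = pd Y6 (pd X4 P) - pd Y2 (pd X3 P) + pd Y3 (pd X2 P)"
definition DD2 :: "mpoly \<Rightarrow> mpoly" where
  "DD2 P = pd Y5 (pd X4 P) - pd Y1 (pd X3 P) + pd Y3 (pd X1 P)"
definition DD3 :: "mpoly \<Rightarrow> mpoly" where
  "DD3 P = pd Y4 (pd X4 P) - pd Y1 (pd X2 P) + pd Y2 (pd X1 P)"
definition DD4 :: "mpoly \<Rightarrow> mpoly" where
  "DD4 P = pd Y4 (pd X3 P) - pd Y5 (pd X2 P) + pd Y6 (pd X1 P)"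

end

theory Submission
  imports Defs
begin

text \<open>Write \<open>taylor G u = u! * coeff G u\<close>. This transform turns each partial derivative
  into a shift of exponents, so the hypotheses on \<open>P\<close> become five linear relations on
  \<open>taylor P\<close> (the terms with \<open>y3\<close> vanish as \<open>P\<close> does not depend on \<open>y3\<close>). Each relation
  expresses the value at one monomial through values at monomials of smaller weight
  \<open>x1 + 3 x4 + y2\<close>, and all critical pairs of this rewrite system are joinable. Hence
  rewriting down to irreducible monomials, and giving an irreducible monomial \<open>U\<close> the value
  of \<open>taylor P\<close> at \<open>U - e\<^sub>y\<^sub>1\<close> (or \<open>0\<close> if \<open>U\<close> has no \<open>y1\<close>), defines a solution \<open>F\<close> of
  the relations with \<open>F (u + e\<^sub>y\<^sub>1) = taylor P u\<close>: the transform of a primitive of \<open>P\<close>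
  in \<open>y1\<close> that satisfies the system. Rewriting preserves the total degree, so \<open>F\<close> comes from
  a polynomial, and its part involving neither \<open>y1\<close> nor \<open>y3\<close> is the required \<open>K\<close>.\<close>

lemma UNIV_var: "(UNIV :: var set) = {X1, X2, X3, X4, Y1, Y2, Y3, Y4, Y5, Y6}"
  by (auto intro: var.exhaust)

instance var :: finite
  by standard (simp add: UNIV_var)

definition inc :: "'a \<Rightarrow> ('a \<Rightarrow> nat) \<Rightarrow> 'a \<Rightarrow> nat" where
  "inc v u = u(v := Suc (u v))"

lemma inc_apply: "inc v u w = (if w = v then Suc (u v) else u w)"
  by (simp add: inc_def)

lemma inc_commute: "inc v (inc w u) = inc w (inc v u)"
  by (auto simp: inc_def fun_eq_iff)

lemma lookup_pd:
  "Poly_Mapping.lookup (pd v P) u = of_nat (Suc (u v)) * Poly_Mapping.lookup P (inc v u)"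
proof -
  have "Poly_Mapping.lookup
      (Poly_Mapping.single (m(v := m v - 1)) (of_nat (m v) * Poly_Mapping.lookup P m)) u
      = (if m = inc v u then of_nat (Suc (u v)) * Poly_Mapping.lookup P m else 0)" for m
  proof (cases "m(v := m v - 1) = u \<and> m v \<noteq> 0")
    case True
    then have "m = inc v u"
      by (auto simp: inc_def fun_eq_iff split: if_splits)
    with True show ?thesis
      by (simp add: lookup_single inc_def)
  next
    case False
    moreover have "m \<noteq> inc v u \<or> m v \<noteq> 0 \<and> m(v := m v - 1) = u"
      by (auto simp: inc_def)
    ultimately show ?thesis
      by (auto simp: lookup_single when_def)
  qed
  then show ?thesis
    by (simp add: pd_def lookup_sum in_keys_iff)
qed

lemma lookup_y1coeff_0:
  "Poly_Mapping.lookup (y1coeff 0 P) u = (if u Y1 = 0 then Poly_Mapping.lookup P u else 0)"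
proof -
  have "Poly_Mapping.lookup (y1coeff 0 P) u =
      (\<Sum>m\<in>{m \<in> Poly_Mapping.keys P. m Y1 = 0}. if m = u then Poly_Mapping.lookup P u else 0)"
    unfolding y1coeff_def lookup_sum
    by (rule sum.cong) (auto simp: lookup_single when_def fun_upd_idem)
  then show ?thesis
    by (simp add: in_keys_iff)
qed

definition mfact :: "('a::finite \<Rightarrow> nat) \<Rightarrow> complex" where
  "mfact u = of_nat (\<Prod>v\<in>UNIV. fact (u v))"

lemma mfact_nonzero: "mfact u \<noteq> 0"
  by (simp add: mfact_def)

lemma mfact_inc: "mfact (inc v u) = of_nat (Suc (u v)) * mfact u"
proof -
  have "(\<Prod>w\<in>UNIV. fact (inc v u w)) = fact (Suc (u v)) * (\<Prod>w\<in>UNIV - {v}. fact (u w) :: nat)"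
    by (simp add: prod.remove[of UNIV v] inc_apply)
  also have "\<dots> = Suc (u v) * (\<Prod>w\<in>UNIV. fact (u w))"
    by (simp add: prod.remove[of UNIV v] algebra_simps)
  finally show ?thesis
    unfolding mfact_def by (metis of_nat_mult)
qed

text \<open>The value at the origin of the derivative of \<open>G\<close> with multi-index \<open>u\<close>.\<close>

definition taylor :: "mpoly \<Rightarrow> (var \<Rightarrow> nat) \<Rightarrow> complex" where
  "taylor G u = mfact u * Poly_Mapping.lookup G u"

lemma taylor_pd [simp]: "taylor (pd v G) u = taylor G (inc v u)"
  by (simp add: taylor_def lookup_pd mfact_inc)

lemma taylor_add [simp]: "taylor (G + H) u = taylor G u + taylor H u"
  by (simp add: taylor_def lookup_add algebra_simps)

lemma taylor_diff [simp]: "taylor (G - H) u = taylor G u - taylor H u"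
  by (simp add: taylor_def lookup_minus algebra_simps)

lemma taylor_uminus [simp]: "taylor (- G) u = - taylor G u"
  by (simp add: taylor_def)

lemma taylor_zero [simp]: "taylor 0 u = 0"
  by (simp add: taylor_def)

lemma taylor_inject: "taylor G = taylor H \<Longrightarrow> G = H"
  by (rule poly_mapping_eqI) (metis taylor_def mfact_nonzero mult_cancel_left)

lemma taylor_nonzero_iff: "taylor G u \<noteq> 0 \<longleftrightarrow> u \<in> Poly_Mapping.keys G"
  by (simp add: taylor_def mfact_nonzero in_keys_iff)

lemma indep_iff_taylor: "indep v G \<longleftrightarrow> (\<forall>u. u v \<noteq> 0 \<longrightarrow> taylor G u = 0)"
  unfolding indep_def by (metis taylor_nonzero_iff)

lemma taylor_y1coeff_0: "taylor (y1coeff 0 G) u = (if u Y1 = 0 then taylor G u else 0)"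
  by (simp add: taylor_def lookup_y1coeff_0)

lemma taylor_Abs_poly_mapping:
  assumes "finite {u. F u \<noteq> 0}"
  shows "taylor (Abs_poly_mapping (\<lambda>u. F u / mfact u)) = F"
proof -
  have "{u. F u / mfact u \<noteq> 0} = {u. F u \<noteq> 0}"
    by (simp add: mfact_nonzero)
  with assms show ?thesis
    by (simp add: taylor_def fun_eq_iff mfact_nonzero)
qed

lemma taylor_DD:
  "taylor (DD G) u =
    taylor G (inc Y3 (inc Y4 u)) - taylor G (inc Y2 (inc Y5 u)) + taylor G (inc Y1 (inc Y6 u))"
  "taylor (DD1 G) u =
    taylor G (inc X4 (inc Y6 u)) - taylor G (inc X3 (inc Y2 u)) + taylor G (inc X2 (inc Y3 u))"
  "taylor (DD2 G) u =
    taylor G (inc X4 (inc Y5 u)) - taylor G (inc X3 (inc Y1 u)) + taylor G (inc X1 (inc Y3 u))"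
  "taylor (DD3 G) u =
    taylor G (inc X4 (inc Y4 u)) - taylor G (inc X2 (inc Y1 u)) + taylor G (inc X1 (inc Y2 u))"
  "taylor (DD4 G) u =
    taylor G (inc X3 (inc Y4 u)) - taylor G (inc X2 (inc Y5 u)) + taylor G (inc X1 (inc Y6 u))"
  by (simp_all add: DD_def DD1_def DD2_def DD3_def DD4_def)

text \<open>The relations that \<open>DD P = \<dots> = DD4 P = 0\<close> impose on \<open>taylor P\<close>, with the
  terms involving \<open>y3\<close> dropped since they vanish when \<open>P\<close> does not depend on \<open>y3\<close>.\<close>

definition lattice_system :: "((var \<Rightarrow> nat) \<Rightarrow> complex) \<Rightarrow> bool" where
  "lattice_system L \<longleftrightarrow> (\<forall>u.
     L (inc Y2 (inc Y5 u)) = L (inc Y1 (inc Y6 u)) \<and>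
     L (inc X4 (inc Y6 u)) = L (inc X3 (inc Y2 u)) \<and>
     L (inc X4 (inc Y5 u)) = L (inc X3 (inc Y1 u)) \<and>
     L (inc X4 (inc Y4 u)) = L (inc X2 (inc Y1 u)) - L (inc X1 (inc Y2 u)) \<and>
     L (inc X1 (inc Y6 u)) = L (inc X2 (inc Y5 u)) - L (inc X3 (inc Y4 u)))"

lemma lattice_system_taylor:
  assumes "indep Y3 P"
    and "DD P = 0" and "DD1 P = 0" and "DD2 P = 0" and "DD3 P = 0" and "DD4 P = 0"
  shows "lattice_system (taylor P)"
proof -
  have "taylor P (inc Y3 (inc Y4 u)) = 0" "taylor P (inc X2 (inc Y3 u)) = 0"
    "taylor P (inc X1 (inc Y3 u)) = 0" for u
    using assms(1) by (simp_all add: indep_iff_taylor inc_apply)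
  moreover have "taylor (DD P) u = 0" "taylor (DD1 P) u = 0" "taylor (DD2 P) u = 0"
    "taylor (DD3 P) u = 0" "taylor (DD4 P) u = 0" for u
    using assms(2-6) by simp_all
  ultimately show ?thesis
    unfolding lattice_system_def taylor_DD by (simp add: algebra_simps)
qed

definition weight :: "(var \<Rightarrow> nat) \<Rightarrow> nat" where
  "weight U = U X1 + 3 * U X4 + U Y2"

definition trade :: "'a \<Rightarrow> 'a \<Rightarrow> 'a \<Rightarrow> 'a \<Rightarrow> ('a \<Rightarrow> nat) \<Rightarrow> 'a \<Rightarrow> nat" where
  "trade a b c d U = U(a := U a - 1, b := U b - 1, c := Suc (U c), d := Suc (U d))"

text \<open>Solved for their monomial of largest weight, the relations coming from \<open>DD\<close>,
  \<open>DD1\<close>, \<open>DD2\<close>, \<open>DD3\<close>, \<open>DD4\<close> become the rewrite steps \<open>t1\<close>, \<open>t2\<close>, \<open>t3\<close>,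
  \<open>t4a\<close>/\<open>t4b\<close>, \<open>t5a\<close>/\<open>t5b\<close>.\<close>

abbreviation "t1 \<equiv> trade Y2 Y5 Y1 Y6"
abbreviation "t2 \<equiv> trade X4 Y6 X3 Y2"
abbreviation "t3 \<equiv> trade X4 Y5 X3 Y1"
abbreviation "t4a \<equiv> trade X4 Y4 X2 Y1"
abbreviation "t4b \<equiv> trade X4 Y4 X1 Y2"
abbreviation "t5a \<equiv> trade X1 Y6 X2 Y5"
abbreviation "t5b \<equiv> trade X1 Y6 X3 Y4"

definition relations_at :: "((var \<Rightarrow> nat) \<Rightarrow> complex) \<Rightarrow> (var \<Rightarrow> nat) \<Rightarrow> bool" where
  "relations_at L U \<longleftrightarrow>
     (0 < U Y2 \<and> 0 < U Y5 \<longrightarrow> L U = L (t1 U)) \<and>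
     (0 < U X4 \<and> 0 < U Y6 \<longrightarrow> L U = L (t2 U)) \<and>
     (0 < U X4 \<and> 0 < U Y5 \<longrightarrow> L U = L (t3 U)) \<and>
     (0 < U X4 \<and> 0 < U Y4 \<longrightarrow> L U = L (t4a U) - L (t4b U)) \<and>
     (0 < U X1 \<and> 0 < U Y6 \<longrightarrow> L U = L (t5a U) - L (t5b U))"

lemma relations_atD:
  assumes "relations_at L U"
  shows "0 < U Y2 \<Longrightarrow> 0 < U Y5 \<Longrightarrow> L U = L (t1 U)"
    and "0 < U X4 \<Longrightarrow> 0 < U Y6 \<Longrightarrow> L U = L (t2 U)"
    and "0 < U X4 \<Longrightarrow> 0 < U Y5 \<Longrightarrow> L U = L (t3 U)"
    and "0 < U X4 \<Longrightarrow> 0 < U Y4 \<Longrightarrow> L U = L (t4a U) - L (t4b U)"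
    and "0 < U X1 \<Longrightarrow> 0 < U Y6 \<Longrightarrow> L U = L (t5a U) - L (t5b U)"
  using assms by (simp_all add: relations_at_def)

lemma inc_inc_fun_upd:
  "0 < U a \<Longrightarrow> 0 < U b \<Longrightarrow> a \<noteq> b \<Longrightarrow> inc a (inc b (U(a := U a - 1, b := U b - 1))) = U"
  by (auto simp: fun_eq_iff inc_def)

lemma all_guarded_iff_all_inc_inc:
  assumes "a \<noteq> b"
  shows "(\<forall>U. 0 < U a \<and> 0 < U b \<longrightarrow> Q U) \<longleftrightarrow> (\<forall>u. Q (inc a (inc b u)))"
proof
  assume "\<forall>u. Q (inc a (inc b u))"
  then show "\<forall>U. 0 < U a \<and> 0 < U b \<longrightarrow> Q U"
    using assms by (metis inc_inc_fun_upd)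
qed (use assms in \<open>simp add: inc_apply\<close>)

lemma trade_inc_inc:
  "distinct [a, b, c, d] \<Longrightarrow> trade a b c d (inc a (inc b u)) = inc c (inc d u)"
  by (auto simp: fun_eq_iff trade_def inc_def)

lemma lattice_system_iff_relations_at: "lattice_system L \<longleftrightarrow> (\<forall>U. relations_at L U)"
  unfolding lattice_system_def relations_at_def all_conj_distrib
  by (simp add: all_guarded_iff_all_inc_inc trade_inc_inc)

lemma weight_trades:
  "0 < U Y2 \<Longrightarrow> weight (t1 U) < weight U"
  "0 < U X4 \<Longrightarrow> weight (t2 U) < weight U"
  "0 < U X4 \<Longrightarrow> weight (t3 U) < weight U"
  "0 < U X4 \<Longrightarrow> weight (t4a U) < weight U"
  "0 < U X4 \<Longrightarrow> weight (t4b U) < weight U"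
  "0 < U X1 \<Longrightarrow> weight (t5a U) < weight U"
  "0 < U X1 \<Longrightarrow> weight (t5b U) < weight U"
  by (simp_all add: weight_def trade_def)

text \<open>Local confluence: where two relations apply, their right-hand sides agree as soon as
  all relations hold at the monomials of smaller weight.\<close>

context
  fixes L :: "(var \<Rightarrow> nat) \<Rightarrow> complex" and U :: "var \<Rightarrow> nat"
  assumes relations_below: "\<And>V. weight V < weight U \<Longrightarrow> relations_at L V"
begin

lemmas relations_belowD = relations_atD[OF relations_below]

lemma critical_pair_12:
  assumes "0 < U Y2" "0 < U Y5" "0 < U Y6" "0 < U X4"
  shows "L (t1 U) = L (t2 U)"
proof -
  have "L (t1 U) = L (t2 (t1 U))"
    by (rule relations_belowD(2)) (use assms in \<open>auto simp: weight_def trade_def\<close>)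
  also have "t2 (t1 U) = t1 (t2 U)"
    using assms by (auto simp: fun_eq_iff trade_def)
  also have "L (t1 (t2 U)) = L (t2 U)"
    by (rule relations_belowD(1)[symmetric]) (use assms in \<open>auto simp: weight_def trade_def\<close>)
  finally show ?thesis .
qed

lemma critical_pair_13:
  assumes "0 < U Y2" "0 < U Y5" "0 < U X4"
  shows "L (t1 U) = L (t3 U)"
proof -
  have "L (t1 U) = L (t2 (t1 U))"
    by (rule relations_belowD(2)) (use assms in \<open>auto simp: weight_def trade_def\<close>)
  also have "t2 (t1 U) = t3 U"
    using assms by (auto simp: fun_eq_iff trade_def)
  finally show ?thesis .
qed

lemma critical_pair_23:
  assumes "0 < U Y6" "0 < U X4" "0 < U Y5"
  shows "L (t2 U) = L (t3 U)"
proof -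
  have "L (t2 U) = L (t1 (t2 U))"
    by (rule relations_belowD(1)) (use assms in \<open>auto simp: weight_def trade_def\<close>)
  also have "t1 (t2 U) = t3 U"
    using assms by (auto simp: fun_eq_iff trade_def)
  finally show ?thesis .
qed

lemma critical_pair_14:
  assumes "0 < U Y2" "0 < U Y5" "0 < U Y4" "0 < U X4"
  shows "L (t1 U) = L (t4a U) - L (t4b U)"
proof -
  have "L (t1 U) = L (t4a (t1 U)) - L (t4b (t1 U))"
    by (rule relations_belowD(4)) (use assms in \<open>auto simp: weight_def trade_def\<close>)
  moreover have "t4a (t1 U) = t1 (t4a U)" and "t4b (t1 U) = t1 (t4b U)"
    using assms by (auto simp: fun_eq_iff trade_def)
  moreover have "L (t1 (t4a U)) = L (t4a U)"
    by (rule relations_belowD(1)[symmetric]) (use assms in \<open>auto simp: weight_def trade_def\<close>)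
  moreover have "L (t1 (t4b U)) = L (t4b U)"
    by (rule relations_belowD(1)[symmetric]) (use assms in \<open>auto simp: weight_def trade_def\<close>)
  ultimately show ?thesis
    by simp
qed

lemma critical_pair_24:
  assumes "0 < U Y6" "0 < U X4" "0 < U Y4"
  shows "L (t2 U) = L (t4a U) - L (t4b U)"
proof -
  have "L (t4b U) = L (t5a (t4b U)) - L (t5b (t4b U))"
    by (rule relations_belowD(5)) (use assms in \<open>auto simp: weight_def trade_def\<close>)
  moreover have "L (t5a (t4b U)) = L (t1 (t5a (t4b U)))"
    by (rule relations_belowD(1)) (use assms in \<open>auto simp: weight_def trade_def\<close>)
  moreover have "t1 (t5a (t4b U)) = t4a U" and "t5b (t4b U) = t2 U"
    using assms by (auto simp: fun_eq_iff trade_def)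
  ultimately show ?thesis
    by simp
qed

lemma critical_pair_34:
  assumes "0 < U X4" "0 < U Y5" "0 < U Y4"
  shows "L (t3 U) = L (t4a U) - L (t4b U)"
proof -
  have "L (t4b U) = L (t1 (t4b U))"
    by (rule relations_belowD(1)) (use assms in \<open>auto simp: weight_def trade_def\<close>)
  moreover have "L (t1 (t4b U)) = L (t5a (t1 (t4b U))) - L (t5b (t1 (t4b U)))"
    by (rule relations_belowD(5)) (use assms in \<open>auto simp: weight_def trade_def\<close>)
  moreover have "t5a (t1 (t4b U)) = t4a U" and "t5b (t1 (t4b U)) = t3 U"
    using assms by (auto simp: fun_eq_iff trade_def)
  ultimately show ?thesis
    by simp
qed

lemma critical_pair_15:
  assumes "0 < U Y2" "0 < U Y5" "0 < U Y6" "0 < U X1"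
  shows "L (t1 U) = L (t5a U) - L (t5b U)"
proof -
  have "L (t1 U) = L (t5a (t1 U)) - L (t5b (t1 U))"
    by (rule relations_belowD(5)) (use assms in \<open>auto simp: weight_def trade_def\<close>)
  moreover have "t5a (t1 U) = t1 (t5a U)" and "t5b (t1 U) = t1 (t5b U)"
    using assms by (auto simp: fun_eq_iff trade_def)
  moreover have "L (t1 (t5a U)) = L (t5a U)"
    by (rule relations_belowD(1)[symmetric]) (use assms in \<open>auto simp: weight_def trade_def\<close>)
  moreover have "L (t1 (t5b U)) = L (t5b U)"
    by (rule relations_belowD(1)[symmetric]) (use assms in \<open>auto simp: weight_def trade_def\<close>)
  ultimately show ?thesis
    by simp
qed

lemma critical_pair_25:
  assumes "0 < U Y6" "0 < U X4" "0 < U X1"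
  shows "L (t2 U) = L (t5a U) - L (t5b U)"
proof -
  have "L (t5a U) = L (t3 (t5a U))"
    by (rule relations_belowD(3)) (use assms in \<open>auto simp: weight_def trade_def\<close>)
  moreover have "L (t5b U) = L (t4a (t5b U)) - L (t4b (t5b U))"
    by (rule relations_belowD(4)) (use assms in \<open>auto simp: weight_def trade_def\<close>)
  moreover have "t4a (t5b U) = t3 (t5a U)" and "t4b (t5b U) = t2 U"
    using assms by (auto simp: fun_eq_iff trade_def)
  ultimately show ?thesis
    by simp
qed

lemma critical_pair_35:
  assumes "0 < U X4" "0 < U Y5" "0 < U Y6" "0 < U X1"
  shows "L (t3 U) = L (t5a U) - L (t5b U)"
proof -
  have "L (t3 U) = L (t5a (t3 U)) - L (t5b (t3 U))"
    by (rule relations_belowD(5)) (use assms in \<open>auto simp: weight_def trade_def\<close>)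
  moreover have "t5a (t3 U) = t3 (t5a U)" and "t5b (t3 U) = t3 (t5b U)"
    using assms by (auto simp: fun_eq_iff trade_def)
  moreover have "L (t3 (t5a U)) = L (t5a U)"
    by (rule relations_belowD(3)[symmetric]) (use assms in \<open>auto simp: weight_def trade_def\<close>)
  moreover have "L (t3 (t5b U)) = L (t5b U)"
    by (rule relations_belowD(3)[symmetric]) (use assms in \<open>auto simp: weight_def trade_def\<close>)
  ultimately show ?thesis
    by simp
qed

lemma critical_pair_45:
  assumes "0 < U Y4" "0 < U X4" "0 < U Y6" "0 < U X1"
  shows "L (t4a U) - L (t4b U) = L (t5a U) - L (t5b U)"
proof -
  have "L (t4a U) = L (t5a (t4a U)) - L (t5b (t4a U))"
    by (rule relations_belowD(5)) (use assms in \<open>auto simp: weight_def trade_def\<close>)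
  moreover have "L (t4b U) = L (t5a (t4b U)) - L (t5b (t4b U))"
    by (rule relations_belowD(5)) (use assms in \<open>auto simp: weight_def trade_def\<close>)
  moreover have "L (t5a U) = L (t4a (t5a U)) - L (t4b (t5a U))"
    by (rule relations_belowD(4)) (use assms in \<open>auto simp: weight_def trade_def\<close>)
  moreover have "L (t5b U) = L (t4a (t5b U)) - L (t4b (t5b U))"
    by (rule relations_belowD(4)) (use assms in \<open>auto simp: weight_def trade_def\<close>)
  moreover have "t5a (t4a U) = t4a (t5a U)" and "t5b (t4a U) = t4a (t5b U)"
    and "t5a (t4b U) = t4b (t5a U)" and "t5b (t4b U) = t4b (t5b U)"
    using assms by (auto simp: fun_eq_iff trade_def)
  ultimately show ?thesis
    by simp
qed

end

text \<open>Evaluation by rewriting with the first applicable relation; for \<open>LP = taylor P\<close>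
  it is the transform of a primitive of \<open>P\<close> in \<open>y1\<close>.\<close>

function y1_antideriv :: "((var \<Rightarrow> nat) \<Rightarrow> complex) \<Rightarrow> (var \<Rightarrow> nat) \<Rightarrow> complex" where
  "y1_antideriv LP U =
    (if 0 < U Y2 \<and> 0 < U Y5 then y1_antideriv LP (t1 U)
     else if 0 < U X4 \<and> 0 < U Y6 then y1_antideriv LP (t2 U)
     else if 0 < U X4 \<and> 0 < U Y5 then y1_antideriv LP (t3 U)
     else if 0 < U X4 \<and> 0 < U Y4 then y1_antideriv LP (t4a U) - y1_antideriv LP (t4b U)
     else if 0 < U X1 \<and> 0 < U Y6 then y1_antideriv LP (t5a U) - y1_antideriv LP (t5b U)
     else if 0 < U Y1 then LP (U(Y1 := U Y1 - 1))
     else 0)"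
  by pat_completeness auto
termination
  by (relation "measure (\<lambda>(LP, U). weight U)") (auto simp: weight_trades)

declare y1_antideriv.simps [simp del]

lemma relations_at_y1_antideriv: "relations_at (y1_antideriv LP) U"
proof (induction "weight U" arbitrary: U rule: less_induct)
  case less
  then have below: "\<And>V. weight V < weight U \<Longrightarrow> relations_at (y1_antideriv LP) V"
    by blast
  show ?case
    unfolding relations_at_def
    using y1_antideriv.simps[of LP U]
      critical_pair_12[OF below] critical_pair_13[OF below] critical_pair_23[OF below]
      critical_pair_14[OF below] critical_pair_24[OF below] critical_pair_34[OF below]
      critical_pair_15[OF below] critical_pair_25[OF below] critical_pair_35[OF below]
      critical_pair_45[OF below]
    by auto
qed

lemma trade_inc: "v \<noteq> a \<Longrightarrow> v \<noteq> b \<Longrightarrow> trade a b c d (inc v u) = inc v (trade a b c d u)"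
  by (auto simp: fun_eq_iff trade_def inc_def)

lemma inc_fun_upd_cancel: "(inc v u)(v := u v) = u"
  by (simp add: inc_def)

lemma y1_antideriv_inc_Y1:
  assumes "lattice_system LP"
  shows "y1_antideriv LP (inc Y1 u) = LP u"
proof (induction "weight u" arbitrary: u rule: less_induct)
  case less
  have "y1_antideriv LP (inc Y1 u) =
    (if 0 < u Y2 \<and> 0 < u Y5 then LP (t1 u)
     else if 0 < u X4 \<and> 0 < u Y6 then LP (t2 u)
     else if 0 < u X4 \<and> 0 < u Y5 then LP (t3 u)
     else if 0 < u X4 \<and> 0 < u Y4 then LP (t4a u) - LP (t4b u)
     else if 0 < u X1 \<and> 0 < u Y6 then LP (t5a u) - LP (t5b u)
     else LP u)"
    using less
    by (simp add: y1_antideriv.simps[of LP "inc Y1 u"] trade_inc inc_apply weight_trades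
        inc_fun_upd_cancel)
  also have "\<dots> = LP u"
    using assms relations_atD[of LP u, symmetric] by (simp add: lattice_system_iff_relations_at)
  finally show ?case .
qed

definition total_degree :: "('a::finite \<Rightarrow> nat) \<Rightarrow> nat" where
  "total_degree U = (\<Sum>v\<in>UNIV. U v)"

lemma total_degree_inc: "total_degree (inc v u) = Suc (total_degree u)"
  by (simp add: total_degree_def sum.remove[of UNIV v] inc_apply)

lemma total_degree_trade:
  assumes "0 < U a" "0 < U b" "distinct [a, b, c, d]"
  shows "total_degree (trade a b c d U) = total_degree U"
proof -
  define u where "u = U(a := U a - 1, b := U b - 1)"
  have U: "inc a (inc b u) = U"
    using inc_inc_fun_upd[of U a b] assms by (simp add: u_def)
  have "trade a b c d U = inc c (inc d u)"
    unfolding U[symmetric] using assms(3) by (rule trade_inc_inc)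
  then show ?thesis
    by (simp add: U[symmetric] total_degree_inc)
qed

lemma finite_total_degree_eq: "finite {U :: 'a::finite \<Rightarrow> nat. total_degree U = n}"
proof (rule finite_subset)
  show "{U :: 'a \<Rightarrow> nat. total_degree U = n} \<subseteq> {U. \<forall>v. U v \<le> n}"
    by (auto simp: total_degree_def intro: member_le_sum)
  show "finite {U :: 'a \<Rightarrow> nat. \<forall>v. U v \<le> n}"
    using finite_set_of_finite_funs[of "UNIV :: 'a set" "{..n}" 0] by simp
qed

lemma total_degree_fun_upd_pred:
  "0 < U v \<Longrightarrow> total_degree U = Suc (total_degree (U(v := U v - 1)))"
proof -
  assume "0 < U v"
  then have "inc v (U(v := U v - 1)) = U"
    by (auto simp: inc_def fun_eq_iff)
  then show ?thesis
    using total_degree_inc[of v "U(v := U v - 1)"] by simp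
qed

lemma y1_antideriv_eq_0:
  assumes "\<forall>m. LP m \<noteq> 0 \<longrightarrow> total_degree U \<noteq> Suc (total_degree m)"
  shows "y1_antideriv LP U = 0"
  using assms
proof (induction "weight U" arbitrary: U rule: less_induct)
  case less
  have below: "y1_antideriv LP V = 0"
    if "weight V < weight U" and "total_degree V = total_degree U" for V
    using less.hyps[OF that(1)] less.prems that(2) by simp
  have "LP (U(Y1 := U Y1 - 1)) = 0" if "0 < U Y1"
    using less.prems total_degree_fun_upd_pred[of U Y1] that by auto
  then show ?case
    by (simp add: y1_antideriv.simps[of LP U] below weight_trades total_degree_trade)
qed

lemma finite_y1_antideriv_support:
  assumes "finite {m. LP m \<noteq> 0}"
  shows "finite {U. y1_antideriv LP U \<noteq> 0}"
proof (rule finite_subset)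
  show "{U. y1_antideriv LP U \<noteq> 0} \<subseteq>
      (\<Union>m\<in>{m. LP m \<noteq> 0}. {U. total_degree U = Suc (total_degree m)})"
    using y1_antideriv_eq_0 by blast
  show "finite (\<Union>m\<in>{m. LP m \<noteq> 0}.
      {U :: var \<Rightarrow> nat. total_degree U = Suc (total_degree m)})"
    using assms by (simp add: finite_total_degree_eq)
qed

theorem mainTheorem9:
  fixes P :: mpoly
  assumes "indep Y3 P"
    and "DD P = 0" and "DD1 P = 0" and "DD2 P = 0" and "DD3 P = 0" and "DD4 P = 0"
  shows "\<exists>K :: mpoly. indep Y1 K \<and> indep Y3 K
           \<and> DD K = - pd Y6 (y1coeff 0 P)
           \<and> DD1 K = 0
           \<and> DD2 K = pd X3 (y1coeff 0 P)
           \<and> DD3 K = pd X2 (y1coeff 0 P)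
           \<and> DD4 K = 0"
proof -
  define F where "F = y1_antideriv (taylor P)"
  define L where "L u = (if u Y1 = 0 \<and> u Y3 = 0 then F u else 0)" for u
  define K where "K = Abs_poly_mapping (\<lambda>u. L u / mfact u)"
  have F_system: "lattice_system F"
    by (simp add: F_def lattice_system_iff_relations_at relations_at_y1_antideriv)
  have F_inc_Y1: "F (inc Y1 u) = taylor P u" for u
    using lattice_system_taylor[OF assms] by (simp add: F_def y1_antideriv_inc_Y1)
  have "finite {u. F u \<noteq> 0}"
    by (simp add: F_def finite_y1_antideriv_support taylor_nonzero_iff)
  then have "finite {u. L u \<noteq> 0}"
    by (rule rev_finite_subset) (auto simp: L_def)
  then have taylor_K: "taylor K = L"
    by (simp add: K_def taylor_Abs_poly_mapping)
  have P_Y3: "u Y3 \<noteq> 0 \<Longrightarrow> taylor P u = 0" for u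
    using assms(1) by (simp add: indep_iff_taylor)
  note simps = taylor_DD taylor_K L_def F_inc_Y1 taylor_y1coeff_0 inc_apply
    inc_commute[of X3 Y1] inc_commute[of X2 Y1]
  show ?thesis
  proof (intro exI conjI)
    show "indep Y1 K" "indep Y3 K"
      by (simp_all add: indep_iff_taylor taylor_K L_def)
    show "DD K = - pd Y6 (y1coeff 0 P)" "DD1 K = 0" "DD2 K = pd X3 (y1coeff 0 P)"
      "DD3 K = pd X2 (y1coeff 0 P)" "DD4 K = 0"
      using F_system P_Y3
      by (auto intro!: taylor_inject simp: fun_eq_iff lattice_system_def simps)
  qed
qed

end
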